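(* Let $\beta>0$ and $\alpha\in(-1,1)$. Define $\rho_\alpha$ on $\{\pm1\}^2$ by $\rho_\alpha(s,t)=\frac{1+\alpha}{4}$ if $s=t$ and $\rho_\alpha(s,t)=\frac{1-\alpha}{4}$ if $s\ne t$. For a probability distribution $\mu$ on $\{\pm1\}^4$ (with coordinates $(\sigma_1,\tau_1,\sigma_2,\tau_2)$) let \[ g(\mu,\rho_\alpha)=D_{\mathrm{KL}}(\mu\,\|\,\rho_\alpha\otimes\rho_\alpha)+\beta\sum_{x\in A_1}\mu(x)+2\beta\sum_{x\in A_2}\mu(x), \] where $A_1=\{x:\sigma_1=\sigma_2,\tau_1\neq\tau_2\}\cup\{x:\sigma_1\neq\sigma_2,\tau_1=\tau_2\}$, $A_2=\{x:\sigma_1=\sigma_2,\tau_1=\tau_2\}$, and $(\rho_\alpha\otimes\rho_\alpha)(\sigma_1,\tau_1,\sigma_2,\tau_2)=\rho_\alpha(\sigma_1,\tau_1)\rho_\alpha(\sigma_2,\tau_2)$. Let $\mu^*$ be the minimizer of $g(\cdot,\rho_\alpha)$ over all probability distributions $\mu$ on $\{\pm1\}^4$ satisfying $\sum_{(\sigma_2,\tau_2)}\mu(\sigma_1,\tau_1,\sigma_2,\tau_2)=\rho_\alpha(\sigma_1,\tau_1)$ for all $(\sigma_1,\tau_1)$ and $\sum_{(\sigma_1,\tau_1)}\mu(\sigma_1,\tau_1,\sigma_2,\tau_2)=\rho_\alpha(\sigma_2,\tau_2)$ for all $(\sigma_2,\tau_2)$. Then, with $z=\sqrt{(1+e^{-2\beta})^2-\alpha^2(1-e^{-2\beta})^2}$,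 \begin{align*} g(\mu^*,\rho_\alpha)&=2\log2-\log\big((1+e^{-2\beta})(1-e^{-2\beta})^2\big)-(1+\alpha)\log(1+\alpha)-(1-\alpha)\log(1-\alpha)\\ &\quad+\frac{1+\alpha}{2}\log\Big((1+e^{-2\beta})^2+\alpha(1-e^{-2\beta})^2-2e^{-\beta}z\Big)+\frac{1-\alpha}{2}\log\Big((1+e^{-2\beta})^2-\alpha(1-e^{-2\beta})^2-2e^{-\beta}z\Big). \end{align*}
   Context: $D_{\mathrm{KL}}(\mu\|\nu)=\sum_\omega\mu(\omega)\log\frac{\mu(\omega)}{\nu(\omega)}$ with the convention $0\log 0=0$. *)

theory Defs
  imports Complex_Main
begin

text \<open>Spins in {+1,-1} are encoded as bool (True = +1, False = -1); only (in)equality of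
spins matters. A point of {+1,-1}^4 is (sigma1, tau1, sigma2, tau2).\<close>

type_synonym spin4 = "bool \<times> bool \<times> bool \<times> bool"

definition rho :: "real \<Rightarrow> bool \<Rightarrow> bool \<Rightarrow> real" where
  "rho \<alpha> s t = (if s = t then (1 + \<alpha>) / 4 else (1 - \<alpha>) / 4)"

definition rho_prod :: "real \<Rightarrow> spin4 \<Rightarrow> real" where
  "rho_prod \<alpha> x = (case x of (s1, t1, s2, t2) \<Rightarrow> rho \<alpha> s1 t1 * rho \<alpha> s2 t2)"

definition DKL :: "(spin4 \<Rightarrow> real) \<Rightarrow> (spin4 \<Rightarrow> real) \<Rightarrow> real" where
  "DKL \<mu> \<nu> = (\<Sum>\<omega>\<in>UNIV. if \<mu> \<omega> = 0 then 0 else \<mu> \<omega> * ln (\<mu> \<omega> / \<nu> \<omega>))"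

definition A1 :: "spin4 set" where
  "A1 = {(s1, t1, s2, t2). s1 = s2 \<and> t1 \<noteq> t2} \<union> {(s1, t1, s2, t2). s1 \<noteq> s2 \<and> t1 = t2}"

definition A2 :: "spin4 set" where
  "A2 = {(s1, t1, s2, t2). s1 = s2 \<and> t1 = t2}"

definition gfun :: "real \<Rightarrow> real \<Rightarrow> (spin4 \<Rightarrow> real) \<Rightarrow> real" where
  "gfun \<beta> \<alpha> \<mu> = DKL \<mu> (rho_prod \<alpha>) + \<beta> * (\<Sum>x\<in>A1. \<mu> x) + 2 * \<beta> * (\<Sum>x\<in>A2. \<mu> x)"

definition coupling :: "real \<Rightarrow> (spin4 \<Rightarrow> real) \<Rightarrow> bool" where
  "coupling \<alpha> \<mu> \<longleftrightarrow>
     (\<forall>x. 0 \<le> \<mu> x) \<and> (\<Sum>x\<in>UNIV. \<mu> x) = 1 \<and>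
     (\<forall>s1 t1. (\<Sum>p\<in>(UNIV :: (bool \<times> bool) set). \<mu> (s1, t1, fst p, snd p)) = rho \<alpha> s1 t1) \<and>
     (\<forall>s2 t2. (\<Sum>p\<in>(UNIV :: (bool \<times> bool) set). \<mu> (fst p, snd p, s2, t2)) = rho \<alpha> s2 t2)"

end

theory Submission
  imports Defs
begin

text \<open>
  For weights \<open>w\<^sub>1, w\<^sub>0 > 0\<close> let \<open>w(s,t)\<close> be \<open>w\<^sub>1\<close> if \<open>s = t\<close> and \<open>w\<^sub>0\<close> otherwise, and let
  \<open>q(\<sigma>\<^sub>1,\<tau>\<^sub>1,\<sigma>\<^sub>2,\<tau>\<^sub>2) = w(\<sigma>\<^sub>1,\<tau>\<^sub>1) w(\<sigma>\<^sub>2,\<tau>\<^sub>2) exp (-c)\<close>, where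
  \<open>c = \<beta> ([\<sigma>\<^sub>1 = \<sigma>\<^sub>2] + [\<tau>\<^sub>1 = \<tau>\<^sub>2])\<close> is the penalty in \<open>g\<close>. Then
  \<open>ln (q / \<rho>\<otimes>\<rho>) + c = h(\<sigma>\<^sub>1,\<tau>\<^sub>1) + h(\<sigma>\<^sub>2,\<tau>\<^sub>2)\<close> with \<open>h = ln (w / \<rho>)\<close>, so if \<open>q\<close> is a
  probability distribution, Gibbs' inequality \<open>D(\<mu>\<parallel>\<nu>) \<ge> \<Sum> \<mu> ln (q / \<nu>)\<close> gives
  \<open>g(\<mu>) \<ge> \<Sum> \<mu> h\<close>, with equality at \<open>\<mu> = q\<close>. For a coupling \<open>\<mu>\<close> this bound only depends on
  the marginals and equals \<open>2 \<Sum> \<rho> h\<close>. Hence \<open>q\<close> is the minimiser as soon as its marginals are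
  \<open>\<rho>\<^sub>\<alpha>\<close>; this is a pair of quadratic equations in \<open>w\<^sub>1, w\<^sub>0\<close> with an explicit positive
  solution, at which \<open>2 \<Sum> \<rho> h\<close> evaluates to the stated formula.
\<close>

lemma kl_summand_ge_diff:
  fixes m q :: real
  assumes "0 \<le> m" "0 < q"
  shows "m - q \<le> (if m = 0 then 0 else m * ln (m / q))"
proof (cases "m = 0")
  case False
  then have "0 < m" using assms(1) by simp
  have "m * ln (q / m) \<le> m * (q / m - 1)"
    using ln_le_minus_one[of "q / m"] \<open>0 < m\<close> assms(2) by (intro mult_left_mono) auto
  also have "\<dots> = q - m"
    using \<open>0 < m\<close> by (simp add: field_simps)
  finally show ?thesis
    using False \<open>0 < m\<close> assms(2) by (simp add: ln_div algebra_simps)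
qed (use assms in simp)

lemma gibbs_inequality:
  fixes \<mu> q \<nu> :: "'a::finite \<Rightarrow> real"
  assumes "\<And>x. 0 \<le> \<mu> x" "\<And>x. 0 < q x" "\<And>x. 0 < \<nu> x"
    and "(\<Sum>x\<in>UNIV. q x) \<le> (\<Sum>x\<in>UNIV. \<mu> x)"
  shows "(\<Sum>x\<in>UNIV. \<mu> x * ln (q x / \<nu> x)) \<le> (\<Sum>x\<in>UNIV. if \<mu> x = 0 then 0 else \<mu> x * ln (\<mu> x / \<nu> x))"
proof -
  have split: "(if \<mu> x = 0 then 0 else \<mu> x * ln (\<mu> x / \<nu> x))
      = \<mu> x * ln (q x / \<nu> x) + (if \<mu> x = 0 then 0 else \<mu> x * ln (\<mu> x / q x))" for x
    using assms(1,2,3)[of x] by (auto simp: ln_div field_simps)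
  have "0 \<le> (\<Sum>x\<in>UNIV. \<mu> x - q x)"
    using assms(4) by (simp add: sum_subtractf)
  also have "\<dots> \<le> (\<Sum>x\<in>UNIV. if \<mu> x = 0 then 0 else \<mu> x * ln (\<mu> x / q x))"
    by (intro sum_mono kl_summand_ge_diff assms)
  finally show ?thesis
    by (simp add: split sum.distrib)
qed

definition agreement_cost :: "real \<Rightarrow> spin4 \<Rightarrow> real" where
  "agreement_cost \<beta> x = (case x of (s1, t1, s2, t2) \<Rightarrow> \<beta> * (of_bool (s1 = s2) + of_bool (t1 = t2)))"

definition pair_weight :: "real \<Rightarrow> real \<Rightarrow> bool \<Rightarrow> bool \<Rightarrow> real" where
  "pair_weight w1 w0 s t = (if s = t then w1 else w0)"

definition gibbs_coupling :: "real \<Rightarrow> real \<Rightarrow> real \<Rightarrow> spin4 \<Rightarrow> real" where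
  "gibbs_coupling \<beta> w1 w0 x = (case x of (s1, t1, s2, t2) \<Rightarrow>
     pair_weight w1 w0 s1 t1 * pair_weight w1 w0 s2 t2 * exp (- agreement_cost \<beta> x))"

lemma sum_UNIV_prod:
  "(\<Sum>p\<in>(UNIV :: ('a::finite \<times> 'b::finite) set). f p) = (\<Sum>a\<in>UNIV. \<Sum>b\<in>UNIV. f (a, b))"
  by (simp add: sum.cartesian_product)

lemma sum_UNIV_quadruple_pairs:
  fixes f :: "'a::finite \<times> 'b::finite \<times> 'c::finite \<times> 'd::finite \<Rightarrow> 'e::comm_monoid_add"
  shows "(\<Sum>x\<in>UNIV. f x) = (\<Sum>p\<in>UNIV. \<Sum>q\<in>UNIV. f (fst p, snd p, fst q, snd q))"
  by (simp add: sum_UNIV_prod[of f] sum_UNIV_prod)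

lemma sum_rho_eq_1: "(\<Sum>p\<in>UNIV. rho \<alpha> (fst p) (snd p)) = 1"
  by (simp add: sum_UNIV_prod UNIV_bool rho_def field_simps)

lemma rho_pos: "-1 < \<alpha> \<Longrightarrow> \<alpha> < 1 \<Longrightarrow> 0 < rho \<alpha> s t"
  by (simp add: rho_def)

lemma gfun_eq_DKL_plus_cost:
  "gfun \<beta> \<alpha> \<mu> = DKL \<mu> (rho_prod \<alpha>) + (\<Sum>x\<in>UNIV. \<mu> x * agreement_cost \<beta> x)"
proof -
  have "\<mu> x * agreement_cost \<beta> x = \<beta> * (\<mu> x * of_bool (x \<in> A1)) + 2 * \<beta> * (\<mu> x * of_bool (x \<in> A2))" for x
    by (cases x) (auto simp: agreement_cost_def A1_def A2_def)
  then have "(\<Sum>x\<in>UNIV. \<mu> x * agreement_cost \<beta> x) = \<beta> * (\<Sum>x\<in>A1. \<mu> x) + 2 * \<beta> * (\<Sum>x\<in>A2. \<mu> x)"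
    by (simp add: sum.distrib flip: sum_distrib_left)
  then show ?thesis
    by (simp add: gfun_def)
qed

lemma coupling_sum_pair_potential:
  assumes "coupling \<alpha> \<mu>"
  shows "(\<Sum>x\<in>UNIV. \<mu> x * (case x of (s1, t1, s2, t2) \<Rightarrow> k s1 t1 + k s2 t2))
    = 2 * (\<Sum>s\<in>UNIV. \<Sum>t\<in>UNIV. rho \<alpha> s t * k s t)"
proof -
  have rows: "(\<Sum>q\<in>UNIV. \<mu> (s, t, fst q, snd q)) = rho \<alpha> s t"
    and cols: "(\<Sum>p\<in>UNIV. \<mu> (fst p, snd p, s, t)) = rho \<alpha> s t" for s t
    using assms unfolding coupling_def by blast+
  have "(\<Sum>x\<in>UNIV. \<mu> x * (case x of (s1, t1, s2, t2) \<Rightarrow> k s1 t1 + k s2 t2))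
      = (\<Sum>s\<in>UNIV. \<Sum>t\<in>UNIV. k s t * (\<Sum>q\<in>UNIV. \<mu> (s, t, fst q, snd q)))
      + (\<Sum>s\<in>UNIV. \<Sum>t\<in>UNIV. k s t * (\<Sum>p\<in>UNIV. \<mu> (fst p, snd p, s, t)))"
    by (simp add: sum_UNIV_prod UNIV_bool algebra_simps)
  also have "\<dots> = 2 * (\<Sum>s\<in>UNIV. \<Sum>t\<in>UNIV. rho \<alpha> s t * k s t)"
    by (simp only: rows cols) (simp add: mult.commute)
  finally show ?thesis .
qed

lemma exp_neg_agreement_cost:
  "exp (- agreement_cost \<beta> (s1, t1, s2, t2))
    = (if s1 = s2 then exp (- \<beta>) else 1) * (if t1 = t2 then exp (- \<beta>) else 1)"
  by (simp add: agreement_cost_def distrib_left exp_add[symmetric])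

lemma coupling_gibbs_coupling:
  assumes "0 < w1" "0 < w0"
    and "w1^2 * (1 + exp (- \<beta>)^2) + 2 * exp (- \<beta>) * w1 * w0 = (1 + \<alpha>) / 4"
    and "w0^2 * (1 + exp (- \<beta>)^2) + 2 * exp (- \<beta>) * w1 * w0 = (1 - \<alpha>) / 4"
  shows "coupling \<alpha> (gibbs_coupling \<beta> w1 w0)"
proof -
  have rows: "(\<Sum>q\<in>UNIV. gibbs_coupling \<beta> w1 w0 (s1, t1, fst q, snd q)) = rho \<alpha> s1 t1"
    and cols: "(\<Sum>p\<in>UNIV. gibbs_coupling \<beta> w1 w0 (fst p, snd p, s1, t1)) = rho \<alpha> s1 t1" for s1 t1
    using assms(3,4)
    by (cases s1; cases t1; simp add: sum_UNIV_prod UNIV_bool gibbs_coupling_def exp_neg_agreement_cost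
          pair_weight_def rho_def power2_eq_square algebra_simps)+
  have "(\<Sum>x\<in>UNIV. gibbs_coupling \<beta> w1 w0 x) = 1"
    by (simp add: sum_UNIV_quadruple_pairs rows sum_rho_eq_1 del: prod.collapse)
  moreover have "0 \<le> gibbs_coupling \<beta> w1 w0 x" for x
    using assms(1,2) by (auto simp: gibbs_coupling_def pair_weight_def split: prod.splits)
  ultimately show ?thesis
    using rows cols by (simp add: coupling_def)
qed

lemma gibbs_coupling_pos:
  assumes "0 < w1" "0 < w0"
  shows "0 < gibbs_coupling \<beta> w1 w0 x"
  using assms by (auto simp: gibbs_coupling_def pair_weight_def split: prod.splits)

lemma ln_gibbs_coupling_ratio:
  assumes "-1 < \<alpha>" "\<alpha> < 1" "0 < w1" "0 < w0"
  shows "ln (gibbs_coupling \<beta> w1 w0 x / rho_prod \<alpha> x) + agreement_cost \<beta> x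
    = (case x of (s1, t1, s2, t2) \<Rightarrow>
        ln (pair_weight w1 w0 s1 t1 / rho \<alpha> s1 t1) + ln (pair_weight w1 w0 s2 t2 / rho \<alpha> s2 t2))"
proof (cases x)
  case (fields s1 t1 s2 t2)
  define r1 where "r1 = pair_weight w1 w0 s1 t1 / rho \<alpha> s1 t1"
  define r2 where "r2 = pair_weight w1 w0 s2 t2 / rho \<alpha> s2 t2"
  have "0 < pair_weight w1 w0 s t" for s t
    using assms(3,4) by (simp add: pair_weight_def)
  then have "0 < r1" "0 < r2"
    using rho_pos[OF assms(1,2)] by (simp_all add: r1_def r2_def)
  have "gibbs_coupling \<beta> w1 w0 x / rho_prod \<alpha> x = r1 * r2 * exp (- agreement_cost \<beta> x)"
    using rho_pos[OF assms(1,2)] by (simp add: fields gibbs_coupling_def rho_prod_def r1_def r2_def)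
  then show ?thesis
    using \<open>0 < r1\<close> \<open>0 < r2\<close> by (simp add: fields ln_mult flip: r1_def r2_def)
qed

lemma gibbs_coupling_minimizes_gfun:
  assumes "-1 < \<alpha>" "\<alpha> < 1" "0 < w1" "0 < w0"
    and coupling_q: "coupling \<alpha> (gibbs_coupling \<beta> w1 w0)"
  defines "V \<equiv> 2 * (\<Sum>s\<in>UNIV. \<Sum>t\<in>UNIV. rho \<alpha> s t * ln (pair_weight w1 w0 s t / rho \<alpha> s t))"
  shows "gfun \<beta> \<alpha> (gibbs_coupling \<beta> w1 w0) = V"
    and "coupling \<alpha> \<mu> \<Longrightarrow> V \<le> gfun \<beta> \<alpha> \<mu>"
proof -
  let ?q = "gibbs_coupling \<beta> w1 w0" and ?\<nu> = "rho_prod \<alpha>" and ?c = "agreement_cost \<beta>"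
  have q_pos: "0 < ?q x" for x
    using assms(3,4) by (rule gibbs_coupling_pos)
  have \<nu>_pos: "0 < ?\<nu> x" for x
    using rho_pos[OF assms(1,2)] by (cases x) (simp add: rho_prod_def)
  have gfun_split: "gfun \<beta> \<alpha> \<mu>' = DKL \<mu>' ?\<nu> - (\<Sum>x\<in>UNIV. \<mu>' x * ln (?q x / ?\<nu> x)) + V"
    if "coupling \<alpha> \<mu>'" for \<mu>'
  proof -
    have "(\<Sum>x\<in>UNIV. \<mu>' x * ln (?q x / ?\<nu> x)) + (\<Sum>x\<in>UNIV. \<mu>' x * ?c x)
        = (\<Sum>x\<in>UNIV. \<mu>' x * (ln (?q x / ?\<nu> x) + ?c x))"
      by (simp add: sum.distrib distrib_left)
    also have "\<dots> = V"
      unfolding ln_gibbs_coupling_ratio[OF assms(1-4)] V_def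
      by (rule coupling_sum_pair_potential[OF that])
    finally have "(\<Sum>x\<in>UNIV. \<mu>' x * ln (?q x / ?\<nu> x)) + (\<Sum>x\<in>UNIV. \<mu>' x * ?c x) = V" .
    then show ?thesis
      by (simp add: gfun_eq_DKL_plus_cost)
  qed
  show "gfun \<beta> \<alpha> ?q = V"
    using gfun_split[OF coupling_q] q_pos by (simp add: DKL_def less_imp_neq[symmetric])
  assume "coupling \<alpha> \<mu>"
  then have "(\<Sum>x\<in>UNIV. \<mu> x * ln (?q x / ?\<nu> x)) \<le> DKL \<mu> ?\<nu>"
    unfolding DKL_def using coupling_q q_pos \<nu>_pos
    by (intro gibbs_inequality) (auto simp: coupling_def)
  then show "V \<le> gfun \<beta> \<alpha> \<mu>"
    using gfun_split[OF \<open>coupling \<alpha> \<mu>\<close>] by simp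
qed

text \<open>Multiplying the two equations shows that \<open>u = w1 * w0\<close> satisfies
  \<open>G u\<^sup>2 + E u = (1 - a\<^sup>2) / 16\<close> (use \<open>D\<^sup>2 - 4 E\<^sup>2 = G\<close>), whose positive root is
  \<open>(z - 2 E) / (4 G)\<close>; the squares \<open>w1\<^sup>2, w0\<^sup>2\<close> are then read off from the equations.\<close>

lemma marginal_equations_solution:
  fixes E a :: real
  assumes E: "0 < E" "E < 1" and a: "-1 < a" "a < 1"
  defines "D \<equiv> 1 + E^2" and "G \<equiv> (1 - E^2)^2"
  defines "z \<equiv> sqrt (D^2 - a^2 * G)"
  defines "X1 \<equiv> D^2 + a * G - 2 * E * z" and "X0 \<equiv> D^2 - a * G - 2 * E * z"
  defines "w1 \<equiv> sqrt (X1 / (4 * (D * G)))" and "w0 \<equiv> sqrt (X0 / (4 * (D * G)))"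
  shows "0 < X1" "0 < X0" "0 < w1" "0 < w0"
    and "w1^2 * D + 2 * E * w1 * w0 = (1 + a) / 4"
    and "w0^2 * D + 2 * E * w1 * w0 = (1 - a) / 4"
proof -
  have "E^2 < 1"
    using E by (simp add: power_less_one_iff)
  then have "0 < D" "0 < G"
    by (simp_all add: D_def G_def add_pos_nonneg)
  have DG: "D^2 - G = 4 * E^2"
    unfolding D_def G_def by algebra
  have "a^2 < 1"
    using a by (simp add: power2_less_1_iff abs_less_iff)
  then have "a^2 * G < G"
    using \<open>0 < G\<close> by simp
  then have rad: "4 * E^2 < D^2 - a^2 * G"
    using DG by linarith
  then have "0 \<le> D^2 - a^2 * G"
    using zero_le_power2[of E] by linarith
  then have z2: "z^2 = D^2 - a^2 * G" and "0 \<le> z"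
    unfolding z_def by simp_all
  have "(2 * E)^2 < z^2"
    using rad z2 by (simp add: power_mult_distrib)
  then have "2 * E < z"
    using \<open>0 \<le> z\<close> by (rule power_less_imp_less_base)
  have Ez: "(2 * E * z)^2 = (D^2 - G) * (D^2 - a^2 * G)"
    using DG z2 by (simp add: power_mult_distrib)
  have X_pos: "0 < D^2 + b * G - 2 * E * z" if "b^2 = a^2" "\<bar>b\<bar> < 1" for b
  proof -
    have "\<bar>b * G\<bar> < G"
      using that(2) \<open>0 < G\<close> by (simp add: abs_mult)
    then have "0 < D^2 + b * G"
      using DG E(1) abs_ge_minus_self[of "b * G"] zero_less_power[of E 2] by linarith
    moreover have "(2 * E * z)^2 < (D^2 + b * G)^2"
    proof -
      have "(D^2 + b * G)^2 - (2 * E * z)^2 = G * D^2 * (1 + b)^2"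
        unfolding Ez that(1)[symmetric] by (simp add: algebra_simps power2_eq_square)
      moreover have "0 < G * D^2 * (1 + b)^2"
        using \<open>0 < G\<close> \<open>0 < D\<close> that(2) by simp
      ultimately show ?thesis by linarith
    qed
    ultimately have "2 * E * z < D^2 + b * G"
      using power_less_imp_less_base by (metis less_imp_le)
    then show ?thesis by simp
  qed
  show "0 < X1" "0 < X0"
    using X_pos[of a] X_pos[of "-a"] a by (simp_all add: X1_def X0_def abs_less_iff)
  have "X1 * X0 = (D * (z - 2 * E))^2"
  proof -
    have "X1 * X0 = (D^2 - 2 * E * z)^2 - a^2 * G^2"
      unfolding X1_def X0_def by (simp add: algebra_simps power2_eq_square)
    also have "\<dots> = (D * (z - 2 * E))^2"
      using z2 DG by algebra
    finally show ?thesis .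
  qed
  then have "w1 * w0 = (z - 2 * E) / (4 * G)"
    using \<open>0 < D\<close> \<open>0 < G\<close> \<open>2 * E < z\<close>
    by (simp add: w1_def w0_def real_sqrt_divide power2_eq_square flip: real_sqrt_mult)
  then have prod: "2 * E * w1 * w0 = 2 * E * (z - 2 * E) / (4 * G)"
    by (simp add: mult.assoc)
  have "w1^2 = X1 / (4 * (D * G))" "w0^2 = X0 / (4 * (D * G))"
    using \<open>0 < X1\<close> \<open>0 < X0\<close> \<open>0 < D\<close> \<open>0 < G\<close> by (simp_all add: w1_def w0_def)
  note w_sq = this
  show "0 < w1" "0 < w0"
    using \<open>0 < X1\<close> \<open>0 < X0\<close> \<open>0 < D\<close> \<open>0 < G\<close> by (simp_all add: w1_def w0_def)
  have "w1^2 * D + 2 * E * w1 * w0 = (X1 + 2 * E * z - 4 * E^2) / (4 * G)"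
    unfolding prod w_sq using \<open>0 < D\<close> \<open>0 < G\<close> by (simp add: field_simps power2_eq_square)
  also have "\<dots> = (1 + a) / 4"
    using \<open>0 < G\<close> DG by (simp add: X1_def field_simps)
  finally show "w1^2 * D + 2 * E * w1 * w0 = (1 + a) / 4" .
  have "w0^2 * D + 2 * E * w1 * w0 = (X0 + 2 * E * z - 4 * E^2) / (4 * G)"
    unfolding prod w_sq using \<open>0 < D\<close> \<open>0 < G\<close> by (simp add: field_simps power2_eq_square)
  also have "\<dots> = (1 - a) / 4"
    using \<open>0 < G\<close> DG by (simp add: X0_def field_simps)
  finally show "w0^2 * D + 2 * E * w1 * w0 = (1 - a) / 4" .
qed

lemma pair_weight_entropy_value:
  fixes a X1 X0 c :: real
  assumes "-1 < a" "a < 1" "0 < X1" "0 < X0" "0 < c"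
  shows "2 * (\<Sum>s\<in>UNIV. \<Sum>t\<in>UNIV.
      rho a s t * ln (pair_weight (sqrt (X1 / (4 * c))) (sqrt (X0 / (4 * c))) s t / rho a s t))
    = 2 * ln 2 - ln c - (1 + a) * ln (1 + a) - (1 - a) * ln (1 - a)
      + (1 + a) / 2 * ln X1 + (1 - a) / 2 * ln X0"
proof -
  have ln4: "ln (4 :: real) = 2 * ln 2"
    using ln_realpow[of 2 2] by simp
  have ln_ratio: "ln (sqrt (X / (4 * c)) / (b / 4)) = ln 2 + (ln X - ln c) / 2 - ln b"
    if "0 < X" "0 < b" for X b
    using that \<open>0 < c\<close> by (simp add: ln_div ln_mult ln_sqrt ln4 field_simps)
  have "0 < 1 + a" "0 < 1 - a"
    using assms(1,2) by simp_all
  let ?w1 = "sqrt (X1 / (4 * c))" and ?w0 = "sqrt (X0 / (4 * c))"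
  have "2 * (\<Sum>s\<in>UNIV. \<Sum>t\<in>UNIV. rho a s t * ln (pair_weight ?w1 ?w0 s t / rho a s t))
      = (1 + a) * ln (?w1 / ((1 + a) / 4)) + (1 - a) * ln (?w0 / ((1 - a) / 4))"
    by (simp add: UNIV_bool pair_weight_def rho_def algebra_simps)
  also have "\<dots> = 2 * ln 2 - ln c - (1 + a) * ln (1 + a) - (1 - a) * ln (1 - a)
      + (1 + a) / 2 * ln X1 + (1 - a) / 2 * ln X0"
    unfolding ln_ratio[OF \<open>0 < X1\<close> \<open>0 < 1 + a\<close>] ln_ratio[OF \<open>0 < X0\<close> \<open>0 < 1 - a\<close>]
    by (simp add: field_simps)
  finally show ?thesis .
qed

theorem lemma8p2:
  fixes \<beta> \<alpha> :: real
  assumes "\<beta> > 0" and "-1 < \<alpha>" and "\<alpha> < 1"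
  defines "z \<equiv> sqrt ((1 + exp (-2*\<beta>))^2 - \<alpha>^2 * (1 - exp (-2*\<beta>))^2)"
  defines "F \<equiv> 2 * ln 2 - ln ((1 + exp (-2*\<beta>)) * (1 - exp (-2*\<beta>))^2)
      - (1 + \<alpha>) * ln (1 + \<alpha>) - (1 - \<alpha>) * ln (1 - \<alpha>)
      + (1 + \<alpha>) / 2 * ln ((1 + exp (-2*\<beta>))^2 + \<alpha> * (1 - exp (-2*\<beta>))^2 - 2 * exp (-\<beta>) * z)
      + (1 - \<alpha>) / 2 * ln ((1 + exp (-2*\<beta>))^2 - \<alpha> * (1 - exp (-2*\<beta>))^2 - 2 * exp (-\<beta>) * z)"
  shows "(\<exists>\<mu>. coupling \<alpha> \<mu> \<and> gfun \<beta> \<alpha> \<mu> = F) \<and> (\<forall>\<mu>. coupling \<alpha> \<mu> \<longrightarrow> F \<le> gfun \<beta> \<alpha> \<mu>)"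
proof -
  note z_def = assms(4) and F_def = assms(5)
  define E where "E = exp (- \<beta>)"
  have "0 < E" "E < 1"
    using \<open>\<beta> > 0\<close> by (simp_all add: E_def)
  have exp_2\<beta>: "exp (-2 * \<beta>) = E^2"
    by (simp add: E_def power2_eq_square flip: exp_add)
  define D G where "D = 1 + E^2" and "G = (1 - E^2)^2"
  have z_eq: "z = sqrt (D^2 - \<alpha>^2 * G)"
    unfolding z_def exp_2\<beta> D_def G_def ..
  define X1 X0 where "X1 = D^2 + \<alpha> * G - 2 * E * z" and "X0 = D^2 - \<alpha> * G - 2 * E * z"
  define w1 w0 where "w1 = sqrt (X1 / (4 * (D * G)))" and "w0 = sqrt (X0 / (4 * (D * G)))"
  note sol = marginal_equations_solution[OF \<open>0 < E\<close> \<open>E < 1\<close> assms(2,3),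
      folded D_def G_def, folded z_eq, folded X1_def X0_def, folded w1_def w0_def]
  have opt_coupling: "coupling \<alpha> (gibbs_coupling \<beta> w1 w0)"
    using sol(3-6) by (intro coupling_gibbs_coupling) (simp_all add: E_def D_def)
  have "0 < D * G"
    using \<open>0 < E\<close> \<open>E < 1\<close> power_less_one_iff[of E 2]
    unfolding D_def G_def by (intro mult_pos_pos) (simp_all add: add_pos_nonneg)
  have "F = 2 * ln 2 - ln (D * G) - (1 + \<alpha>) * ln (1 + \<alpha>) - (1 - \<alpha>) * ln (1 - \<alpha>)
      + (1 + \<alpha>) / 2 * ln X1 + (1 - \<alpha>) / 2 * ln X0"
    unfolding F_def exp_2\<beta> E_def[symmetric] unfolding D_def[symmetric] G_def[symmetric]
    unfolding X1_def[symmetric] X0_def[symmetric] ..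
  also have "\<dots> = 2 * (\<Sum>s\<in>UNIV. \<Sum>t\<in>UNIV. rho \<alpha> s t * ln (pair_weight w1 w0 s t / rho \<alpha> s t))"
    unfolding w1_def w0_def by (rule pair_weight_entropy_value[symmetric]) (use assms(2,3) sol(1,2) \<open>0 < D * G\<close> in auto)
  finally have "F = \<dots>" .
  then show ?thesis
    using gibbs_coupling_minimizes_gfun[OF assms(2,3) sol(3,4) opt_coupling] opt_coupling by auto
qed

end
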